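(* Let $\mathcal O$ be a cyclic operad, $n\ge1$, and let $S_0\in\mathcal S[2]$ be the $\mathcal O$-spider represented by the unit $1_{\mathcal O}\in\mathcal O[1]$. The subspace $\mathfrak a\mathcal O_n^0$ of $\mathfrak a\mathcal O_n$ spanned by the symplecto-spiders $[S_0\otimes v\otimes w]$, $v,w\in V_n$, is a Lie subalgebra of $\mathfrak a\mathcal O_n$ isomorphic to the symplectic Lie algebra $\mathfrak{sp}(2n)$.
   Context: Work over $\mathbb R$. A cyclic operad $\mathcal O$ consists of real vector spaces $\mathcal O[m]$ ($m\ge1$), a unit $1_{\mathcal O}\in\mathcal O[1]$, composition maps $\gamma:\mathcal O[m]\otimes\mathcal O[i_1]\otimes\cdots\otimes\mathcal O[i_m]\to\mathcal O[i_1+\cdots+i_m]$, and actions of $\Sigma_{m+1}$ on $\mathcal O[m]$ (permuting the output slot $0$ and the input slots $1,\dots,m$), satisfying the usual cyclic operad axioms (Getzler–Kapranov). For $m\ge2$ let $*_m$ be the star with one internal vertex and $m$ legs; a labeling is a bijection $L$ from the legs to $\{0,\dots,m-1\}$. The space of $\mathcal O$-spiders with $m$ legs is the coinvariant space $\mathcal S[m]=(\bigoplus_L\mathcal O[m-1])_{\Sigma_m}$, with $\sigma\cdot(o)_L=(\sigma\cdot o)_{\sigma\cdot L}$; each element is a class $[o_L]$. Given spiders $S,T$ and legs $\lambda$ of $S$, $\mu$ of $T$, the mating $(S,\lambda)\circ(\mu,T)$ is obtained by choosing representatives $(o_1)_{L_1}$ of $S$, $(o_2)_{L_2}$ of $T$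 with $L_1(\lambda)=0$, $L_2(\mu)=1$, and taking the class of $\gamma(o_2\otimes o_1\otimes 1_{\mathcal O}\otimes\cdots\otimes 1_{\mathcal O})$ with legs the remaining legs of $S$ and $T$ (the legs of $S$ inserted in order at the position of $\mu$). Let $V_n=\mathbb R^{2n}$ with basis $p_1,\dots,p_n,q_1,\dots,q_n$ and standard symplectic form $\omega$ ($\omega(p_i,q_j)=\delta_{ij}=-\omega(q_j,p_i)$, $\omega(p_i,p_j)=\omega(q_i,q_j)=0$). Define $\mathfrak a\mathcal O_n=\bigoplus_{m\ge2}(\mathcal S[m]\otimes V_n^{\otimes m})_{\Sigma_m}$ ($\Sigma_m$ acting diagonally); elements $[S\otimes v_1\otimes\cdots\otimes v_m]$ are symplecto-spiders (vector $v_i$ on the $i$-th leg). The bracket of symplecto-spiders $\mathbf s_1,\mathbf s_2$ is $[\mathbf s_1,\mathbf s_2]=\sum_{\lambda\in\mathbf s_1,\mu\in\mathbf s_2}\omega(v_\lambda,w_\mu)\,\cdot$(the symplecto-spider obtained by mating the underlying spiders along $\lambda,\mu$, deleting $v_\lambda,w_\mu$ and keeping the vectors on the remaining legs), extended bilinearly; this is a Lie bracket. *)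

theory Defs
  imports "HOL-Analysis.Analysis" "HOL-Combinatorics.Permutations" "HOL-Combinatorics.Transposition"
begin

text \<open>
  A cyclic operad over the reals is modelled by
  \<^item> Op :: nat => 'a set, Op m a real linear subspace of the real vector space 'a (m >= 1),
  \<^item> u, the unit, an element of Op 1,
  \<^item> gam ar x ps, the composition gamma(x; ps!0, ..., ps!(m-1)) where x is in Op m,
    m = length ar, and ps!k is in Op (ar!k),
  \<^item> act m s x, the action of a permutation s of the slots 0..m (0 = output) on Op m.
  Convention: slot j of x becomes slot (s j) of act m s x.
\<close>

definition args :: "(nat \<Rightarrow> 'a set) \<Rightarrow> nat list \<Rightarrow> 'a list \<Rightarrow> bool" where
  "args Op ar ps \<longleftrightarrow> length ps = length ar \<and> (\<forall>k<length ar. 1 \<le> ar!k \<and> ps!k \<in> Op (ar!k))"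

text \<open>offset of the k-th (1-based) block, and the k-th (0-based) block of a list\<close>
definition off :: "nat list \<Rightarrow> nat \<Rightarrow> nat" where
  "off ar k = sum_list (take (k - 1) ar)"

definition block :: "nat list \<Rightarrow> nat \<Rightarrow> 'b list \<Rightarrow> 'b list" where
  "block ar k xs = take (ar!k) (drop (sum_list (take k ar)) xs)"

text \<open>partial composition a o_i b = gamma(a; 1,..,1,b,1,..,1), b in the i-th input (1-based)\<close>
definition pcomp :: "(nat list \<Rightarrow> 'a \<Rightarrow> 'a list \<Rightarrow> 'a) \<Rightarrow> 'a \<Rightarrow> nat \<Rightarrow> nat \<Rightarrow> nat \<Rightarrow> 'a \<Rightarrow> 'a \<Rightarrow> 'a" where
  "pcomp gam u m n i a b = gam ((replicate m 1)[i - 1 := n]) a ((replicate m u)[i - 1 := b])"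

definition rot :: "nat \<Rightarrow> nat \<Rightarrow> nat" where
  "rot k j = (if j = 0 then k else if j \<le> k then j - 1 else j)"

definition cyclic_operad ::
  "(nat \<Rightarrow> 'a::real_vector set) \<Rightarrow> 'a \<Rightarrow> (nat list \<Rightarrow> 'a \<Rightarrow> 'a list \<Rightarrow> 'a)
    \<Rightarrow> (nat \<Rightarrow> (nat \<Rightarrow> nat) \<Rightarrow> 'a \<Rightarrow> 'a) \<Rightarrow> bool" where
  "cyclic_operad Op u gam act \<longleftrightarrow>
    \<comment> \<open>vector spaces\<close>
    (\<forall>m\<ge>1. subspace (Op m)) \<and>
    u \<in> Op 1 \<and>
    \<comment> \<open>composition lands in the right space and ar multilinear\<close>
    (\<forall>ar x ps. length ar \<ge> 1 \<and> x \<in> Op (length ar) \<and> args Op ar ps \<longrightarrow>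
        gam ar x ps \<in> Op (sum_list ar)) \<and>
    (\<forall>ar x x' ps c. length ar \<ge> 1 \<and> x \<in> Op (length ar) \<and> x' \<in> Op (length ar) \<and> args Op ar ps \<longrightarrow>
        gam ar (c *\<^sub>R x + x') ps = c *\<^sub>R gam ar x ps + gam ar x' ps) \<and>
    (\<forall>ar x ps k p p' c. length ar \<ge> 1 \<and> x \<in> Op (length ar) \<and> args Op ar ps \<and> k < length ar \<and>
        p \<in> Op (ar!k) \<and> p' \<in> Op (ar!k) \<longrightarrow>
        gam ar x (ps[k := c *\<^sub>R p + p']) = c *\<^sub>R gam ar x (ps[k := p]) + gam ar x (ps[k := p'])) \<and>
    \<comment> \<open>unit laws\<close>
    (\<forall>m\<ge>1. \<forall>x\<in>Op m. gam [m] u [x] = x \<and> gam (replicate m 1) x (replicate m u) = x) \<and>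
    \<comment> \<open>associativity\<close>
    (\<forall>ar x ps js qs. length ar \<ge> 1 \<and> x \<in> Op (length ar) \<and> args Op ar ps \<and>
        length js = sum_list ar \<and> args Op js qs \<longrightarrow>
        gam js (gam ar x ps) qs =
        gam (map (\<lambda>k. sum_list (block ar k js)) [0..<length ar]) x
             (map (\<lambda>k. gam (block ar k js) (ps!k) (block ar k qs)) [0..<length ar])) \<and>
    \<comment> \<open>the action of the symmetric group on slots 0..m\<close>
    (\<forall>m\<ge>1. \<forall>s. s permutes {..m} \<longrightarrow> (\<forall>x\<in>Op m. act m s x \<in> Op m)) \<and>
    (\<forall>m\<ge>1. \<forall>s. s permutes {..m} \<longrightarrow> (\<forall>x\<in>Op m. \<forall>x'\<in>Op m. \<forall>c.
        act m s (c *\<^sub>R x + x') = c *\<^sub>R act m s x + act m s x')) \<and>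
    (\<forall>m\<ge>1. \<forall>x\<in>Op m. act m id x = x) \<and>
    (\<forall>m\<ge>1. \<forall>s r. s permutes {..m} \<and> r permutes {..m} \<longrightarrow>
        (\<forall>x\<in>Op m. act m (s \<circ> r) x = act m s (act m r x))) \<and>
    \<comment> \<open>equivariance with respect to permutations of the inputs of the outer operation\<close>
    (\<forall>ar x ps s b. length ar \<ge> 1 \<and> x \<in> Op (length ar) \<and> args Op ar ps \<and>
        s permutes {1..length ar} \<and> b permutes {..sum_list ar} \<and> b 0 = 0 \<and>
        (\<forall>j\<in>{1..length ar}. \<forall>r\<in>{1..ar!(s j - 1)}.
            b (off (map (\<lambda>j'. ar!(s j' - 1)) [1..<length ar + 1]) j + r) = off ar (s j) + r) \<longrightarrow>
        gam ar (act (length ar) s x) ps =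
        act (sum_list ar) b
          (gam (map (\<lambda>j. ar!(s j - 1)) [1..<length ar + 1]) x
                (map (\<lambda>j. ps!(s j - 1)) [1..<length ar + 1]))) \<and>
    \<comment> \<open>equivariance with respect to permutations of the inputs of an inner operation\<close>
    (\<forall>ar x ps k t b. length ar \<ge> 1 \<and> x \<in> Op (length ar) \<and> args Op ar ps \<and>
        k \<in> {1..length ar} \<and> t permutes {1..ar!(k - 1)} \<and> b permutes {..sum_list ar} \<and>
        (\<forall>r\<in>{1..ar!(k - 1)}. b (off ar k + r) = off ar k + t r) \<and>
        (\<forall>p. p \<notin> {off ar k + 1..off ar k + ar!(k - 1)} \<longrightarrow> b p = p) \<longrightarrow>
        gam ar x (ps[k - 1 := act (ar!(k - 1)) t (ps!(k - 1))]) = act (sum_list ar) b (gam ar x ps)) \<and>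
    \<comment> \<open>cyclic axioms\<close>
    act 1 (Transposition.transpose 0 1) u = u \<and>
    (\<forall>m n i a b. m \<ge> 1 \<and> n \<ge> 1 \<and> 2 \<le> i \<and> i \<le> m \<and> a \<in> Op m \<and> b \<in> Op n \<longrightarrow>
        act (m + n - 1) (rot (m + n - 1)) (pcomp gam u m n i a b) =
        pcomp gam u m n (i - 1) (act m (rot m) a) b) \<and>
    (\<forall>m n a b. m \<ge> 1 \<and> n \<ge> 1 \<and> a \<in> Op m \<and> b \<in> Op n \<longrightarrow>
        act (m + n - 1) (rot (m + n - 1)) (pcomp gam u m n 1 a b) =
        pcomp gam u n m n (act n (rot n) b) (act m (rot m) a))"

text \<open>V_n = real^('n + 'n); p_i = axis (Inl i) 1, q_i = axis (Inr i) 1; n = CARD('n) >= 1.\<close>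

definition omega :: "real^('n::finite + 'n) \<Rightarrow> real^('n + 'n) \<Rightarrow> real" where
  "omega v w = (\<Sum>i\<in>UNIV. v $ Inl i * w $ Inr i - v $ Inr i * w $ Inl i)"

definition Jmat :: "real^('n::finite + 'n)^('n + 'n)" where
  "Jmat = (\<chi> a b. case (a, b) of (Inl i, Inr j) \<Rightarrow> (if i = j then 1 else 0)
                               | (Inr i, Inl j) \<Rightarrow> (if i = j then -1 else 0)
                               | _ \<Rightarrow> 0)"

definition sp :: "(real^('n::finite + 'n)^('n + 'n)) set" where
  "sp = {X. Finite_Cartesian_Product.transpose X ** Jmat + Jmat ** X = 0}"

definition mbr :: "real^('n::finite + 'n)^('n + 'n) \<Rightarrow> real^('n + 'n)^('n + 'n) \<Rightarrow> real^('n + 'n)^('n + 'n)" where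
  "mbr X Y = X ** Y - Y ** X"

text \<open>
  A generator (x, ws) with m = length ws >= 2 and x in Op (m-1) stands for the
  symplecto-spider [(x)_L (x) v_1 (x) ... (x) v_m] where the leg carrying the vector
  ws!j ar labelled j, i.e. ws!j ar the vector on slot j of x. The space aO_n ar the
  quotient of the free real vector space FS on such generators (finitely supported
  real functions on generators) by the subspace Rel spanned by the relations expressing
  multilinearity and the coinvariance (x, ws) ~ (s.x, ws permuted by s).
\<close>

type_synonym ('a, 'n) gen = "'a \<times> (real^('n + 'n)) list"

definition valid_gen :: "(nat \<Rightarrow> 'a set) \<Rightarrow> ('a, 'n::finite) gen \<Rightarrow> bool" where
  "valid_gen Op g \<longleftrightarrow> length (snd g) \<ge> 2 \<and> fst g \<in> Op (length (snd g) - 1)"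

definition delta :: "'g \<Rightarrow> 'g \<Rightarrow> real" where
  "delta g = (\<lambda>h. if h = g then 1 else 0)"

definition fspan :: "('g \<Rightarrow> real) set \<Rightarrow> ('g \<Rightarrow> real) set" where
  "fspan S = {f. \<exists>A c. finite A \<and> A \<subseteq> S \<and> f = (\<lambda>h. \<Sum>x\<in>A. c x * x h)}"

definition FS :: "(nat \<Rightarrow> 'a set) \<Rightarrow> (('a, 'n::finite) gen \<Rightarrow> real) set" where
  "FS Op = {f. finite {g. f g \<noteq> 0} \<and> (\<forall>g. f g \<noteq> 0 \<longrightarrow> valid_gen Op g)}"

definition relations :: "(nat \<Rightarrow> 'a::real_vector set) \<Rightarrow> (nat \<Rightarrow> (nat \<Rightarrow> nat) \<Rightarrow> 'a \<Rightarrow> 'a)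
    \<Rightarrow> (('a, 'n::finite) gen \<Rightarrow> real) set" where
  "relations Op act =
     {(\<lambda>h. delta (c *\<^sub>R x + x', ws) h - c * delta (x, ws) h - delta (x', ws) h) | x x' ws c.
        valid_gen Op (x, ws) \<and> valid_gen Op (x', ws)}
   \<union> {(\<lambda>h. delta (x, ws[j := c *\<^sub>R v + v']) h - c * delta (x, ws[j := v]) h - delta (x, ws[j := v']) h)
        | x ws j v v' c. valid_gen Op (x, ws) \<and> j < length ws}
   \<union> {(\<lambda>h. delta (act (length ws - 1) s x, map (\<lambda>k. ws ! inv s k) [0..<length ws]) h - delta (x, ws) h)
        | x ws s. valid_gen Op (x, ws) \<and> s permutes {..<length ws}}"

definition Rel :: "(nat \<Rightarrow> 'a::real_vector set) \<Rightarrow> (nat \<Rightarrow> (nat \<Rightarrow> nat) \<Rightarrow> 'a \<Rightarrow> 'a)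
    \<Rightarrow> (('a, 'n::finite) gen \<Rightarrow> real) set" where
  "Rel Op act = fspan (relations Op act)"

text \<open>
  Mating of generator g1 along its slot i with generator g2 along its slot j:
  bring slot i of g1 to position 0 and slot j of g2 to position 1 (by transpositions),
  then compose gamma(o2'; o1', 1, ..., 1); the vectors on the remaining legs are kept.
\<close>
definition mate :: "'a \<Rightarrow> (nat list \<Rightarrow> 'a \<Rightarrow> 'a list \<Rightarrow> 'a) \<Rightarrow> (nat \<Rightarrow> (nat \<Rightarrow> nat) \<Rightarrow> 'a \<Rightarrow> 'a)
    \<Rightarrow> ('a, 'n::finite) gen \<Rightarrow> nat \<Rightarrow> ('a, 'n) gen \<Rightarrow> nat \<Rightarrow> ('a, 'n) gen" where
  "mate u gam act g1 i g2 j =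
     (let m1 = length (snd g1); m2 = length (snd g2);
          s1 = Transposition.transpose i 0; s2 = Transposition.transpose j 1;
          o1 = act (m1 - 1) s1 (fst g1); o2 = act (m2 - 1) s2 (fst g2);
          ws1 = map (\<lambda>k. snd g1 ! inv s1 k) [0..<m1];
          ws2 = map (\<lambda>k. snd g2 ! inv s2 k) [0..<m2]
      in (gam ((m1 - 1) # replicate (m2 - 2) 1) o2 (o1 # replicate (m2 - 2) u),
          [ws2 ! 0] @ tl ws1 @ drop 2 ws2))"

definition brgen :: "'a \<Rightarrow> (nat list \<Rightarrow> 'a \<Rightarrow> 'a list \<Rightarrow> 'a) \<Rightarrow> (nat \<Rightarrow> (nat \<Rightarrow> nat) \<Rightarrow> 'a \<Rightarrow> 'a)
    \<Rightarrow> ('a, 'n::finite) gen \<Rightarrow> ('a, 'n) gen \<Rightarrow> ('a, 'n) gen \<Rightarrow> real" where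
  "brgen u gam act g1 g2 =
     (\<lambda>h. \<Sum>i<length (snd g1). \<Sum>j<length (snd g2).
            omega (snd g1 ! i) (snd g2 ! j) * delta (mate u gam act g1 i g2 j) h)"

definition br :: "'a \<Rightarrow> (nat list \<Rightarrow> 'a \<Rightarrow> 'a list \<Rightarrow> 'a) \<Rightarrow> (nat \<Rightarrow> (nat \<Rightarrow> nat) \<Rightarrow> 'a \<Rightarrow> 'a)
    \<Rightarrow> (('a, 'n::finite) gen \<Rightarrow> real) \<Rightarrow> (('a, 'n) gen \<Rightarrow> real) \<Rightarrow> ('a, 'n) gen \<Rightarrow> real" where
  "br u gam act f g =
     (\<lambda>h. \<Sum>g1\<in>{x. f x \<noteq> 0}. \<Sum>g2\<in>{x. g x \<noteq> 0}. f g1 * g g2 * brgen u gam act g1 g2 h)"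

text \<open>representatives of the subspace aO_n^0 spanned by [S_0 (x) v (x) w]\<close>
definition A0 :: "'a \<Rightarrow> (('a, 'n::finite) gen \<Rightarrow> real) set" where
  "A0 u = fspan {delta (u, [v, w]) | v w. True}"

end

(* The spiders [S_0 (x) v (x) w] are the two-legged spiders carrying the unit 1. Mating two of
   them along any pair of legs only composes units, gamma(1; 1) = 1, so their bracket is again a
   combination of such spiders, weighted by omega of the mated vectors. Modulo the relations,
   [S_0 (x) v (x) w] is bilinear in (v, w) and symmetric, because the transposition of the two
   slots fixes 1; hence every element of aO^0_n is the image of a symmetric matrix M under
   M |-> sum_ab M_ab [S_0 (x) e_a (x) e_b]. This map is injective on symmetric matrices: a linear
   functional on O[1] that is 1 on the unit, averaged over the transposition, together with the
   symmetric form v_p w_q + v_q w_p defines a functional that vanishes on all relations and reads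
   off M_pq + M_qp. Finally the bracket of the images of A and B is the image of 4 (AJB)^T up to an
   antisymmetric matrix, and composing with the isomorphism X |-> -1/2 X J of sp(2n) onto the
   symmetric matrices turns this into the commutator. *)

theory Submission
  imports Defs "HOL-Library.Function_Algebras"
begin

section \<open>Finitely supported real functions\<close>

interpretation fun_vec: module "\<lambda>(c::real) (f :: 'g \<Rightarrow> real) h. c * f h"
  by unfold_locales (auto simp: fun_eq_iff algebra_simps)

lemma sum_fun_apply: "(\<Sum>x\<in>A. f x) h = (\<Sum>x\<in>A. f x h)"
  by (induction A rule: infinite_finite_induct) auto

lemma fspan_eq_span: "fspan S = fun_vec.span S"
  unfolding fspan_def fun_vec.span_explicit by (auto simp: sum_fun_apply fun_eq_iff)

lemma Rel_eq_span: "Rel Op act = fun_vec.span (relations Op act)"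
  unfolding Rel_def fspan_eq_span ..

lemma A0_eq_span: "A0 u = fun_vec.span {delta (u, [v, w]) | v w. True}"
  unfolding A0_def fspan_eq_span ..

lemma support_add_subset: "{g. (f + f') g \<noteq> 0} \<subseteq> {g. f g \<noteq> 0} \<union> {g. f' g \<noteq> (0::real)}"
  by auto

lemma subspace_finite_support_within:
  "fun_vec.subspace {f :: 'g \<Rightarrow> real. finite {g. f g \<noteq> 0} \<and> {g. f g \<noteq> 0} \<subseteq> S}"
  unfolding fun_vec.subspace_def
proof safe
  fix f f' :: "'g \<Rightarrow> real"
  assume "finite {g. f g \<noteq> 0}" "{g. f g \<noteq> 0} \<subseteq> S" "finite {g. f' g \<noteq> 0}" "{g. f' g \<noteq> 0} \<subseteq> S"
  then show "finite {g. (f + f') g \<noteq> 0}" "\<And>g. (f + f') g \<noteq> 0 \<Longrightarrow> g \<in> S"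
    using support_add_subset[of f f'] by (auto intro: finite_subset)
qed (auto intro: finite_subset)

lemma support_span:
  assumes "\<And>r. r \<in> R \<Longrightarrow> finite {g. r g \<noteq> 0} \<and> {g. r g \<noteq> 0} \<subseteq> S"
    and "f \<in> fun_vec.span R"
  shows "finite {g. f g \<noteq> 0} \<and> {g. f g \<noteq> 0} \<subseteq> S"
  using fun_vec.span_induct[OF assms(2) subspace_finite_support_within] assms(1) by blast

definition pairing :: "('g \<Rightarrow> real) \<Rightarrow> ('g \<Rightarrow> real) \<Rightarrow> real" where
  "pairing l f = (\<Sum>g | f g \<noteq> 0. f g * l g)"

lemma pairing_eq_sum_superset:
  assumes "finite T" "{g. f g \<noteq> 0} \<subseteq> T"
  shows "pairing l f = (\<Sum>g\<in>T. f g * l g)"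
  unfolding pairing_def using assms by (intro sum.mono_neutral_left) auto

lemma subspace_annihilated:
  "fun_vec.subspace {f :: 'g \<Rightarrow> real. finite {g. f g \<noteq> 0} \<and> pairing l f = 0}"
  unfolding fun_vec.subspace_def
proof safe
  fix f f' :: "'g \<Rightarrow> real"
  assume f: "finite {g. f g \<noteq> 0}" "pairing l f = 0" and f': "finite {g. f' g \<noteq> 0}" "pairing l f' = 0"
  let ?T = "{g. f g \<noteq> 0} \<union> {g. f' g \<noteq> 0}"
  have T: "finite ?T" using f f' by simp
  then show "finite {g. (f + f') g \<noteq> 0}" using support_add_subset by (rule finite_subset[rotated])
  have "pairing l (f + f') = (\<Sum>g\<in>?T. f g * l g) + (\<Sum>g\<in>?T. f' g * l g)"
    by (simp add: pairing_eq_sum_superset[OF T support_add_subset] sum.distrib distrib_right)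
  also have "\<dots> = pairing l f + pairing l f'"
    by (simp add: pairing_eq_sum_superset[OF T Un_upper1] pairing_eq_sum_superset[OF T Un_upper2])
  finally show "pairing l (f + f') = 0" using f f' by simp
next
  fix c and f :: "'g \<Rightarrow> real"
  assume f: "finite {g. f g \<noteq> 0}" "pairing l f = 0"
  have sub: "{g. c * f g \<noteq> 0} \<subseteq> {g. f g \<noteq> 0}" by auto
  then show "finite {g. c * f g \<noteq> 0}" using f by (auto intro: finite_subset)
  have "pairing l (\<lambda>h. c * f h) = c * pairing l f"
    unfolding pairing_eq_sum_superset[OF f(1) sub] by (simp add: pairing_def sum_distrib_left mult.assoc)
  then show "pairing l (\<lambda>h. c * f h) = 0" using f by simp
qed (simp_all add: pairing_def)

lemma pairing_vanishes_on_span: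
  assumes "\<And>r. r \<in> R \<Longrightarrow> finite {g. r g \<noteq> 0} \<and> pairing l r = 0"
    and "f \<in> fun_vec.span R"
  shows "pairing l f = 0"
  using fun_vec.span_induct[OF assms(2) subspace_annihilated] assms(1) by blast

lemma delta_combination_annihilated:
  fixes l :: "'g \<Rightarrow> real"
  assumes "l a - c * l b - l e = 0"
  shows "finite {g. delta a g - c * delta b g - delta e g \<noteq> 0}
    \<and> pairing l (\<lambda>h. delta a h - c * delta b h - delta e h) = 0"
proof
  let ?r = "\<lambda>h. delta a h - c * delta b h - delta e h"
  have sub: "{g. ?r g \<noteq> 0} \<subseteq> {a, b, e}" by (auto simp: delta_def)
  then show "finite {g. ?r g \<noteq> 0}" by (rule finite_subset) simp
  have delta: "(\<Sum>g\<in>{a, b, e}. delta x g * l g) = l x" if "x \<in> {a, b, e}" for x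
    using that by (simp add: delta_def if_distrib if_distribR sum.delta cong: if_cong)
  have "pairing l ?r = (\<Sum>g\<in>{a, b, e}. delta a g * l g) - c * (\<Sum>g\<in>{a, b, e}. delta b g * l g)
      - (\<Sum>g\<in>{a, b, e}. delta e g * l g)"
    unfolding pairing_eq_sum_superset[OF _ sub, simplified]
    by (simp add: sum_subtractf sum.distrib sum_distrib_left algebra_simps)
  then show "pairing l ?r = 0" using assms by (simp add: delta)
qed

section \<open>The symplectic form and sp(2n)\<close>

lemma if_zero_times: "(if P then a else 0) * (b::real) = (if P then a * b else 0)"
  by simp

lemma times_if_zero: "(a::real) * (if P then b else 0) = (if P then a * b else 0)"
  by simp

lemma omega_axis: "omega (axis a 1) (axis c 1) = Jmat $ a $ c"
  unfolding omega_def Jmat_def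
  by (cases a; cases c) (auto simp: axis_def if_zero_times times_if_zero sum.delta sum.delta' sum_negf)

lemma sum_UNIV_Plus:
  fixes f :: "'n::finite + 'm::finite \<Rightarrow> 'c::comm_monoid_add"
  shows "(\<Sum>k\<in>UNIV. f k) = (\<Sum>i\<in>UNIV. f (Inl i)) + (\<Sum>i\<in>UNIV. f (Inr i))"
  using sum.Plus[of "UNIV::'n::finite set" "UNIV::'m::finite set" f] by (simp add: o_def)

lemma Jmat_squared: "(Jmat :: real^('n::finite + 'n)^('n + 'n)) ** Jmat = - mat 1"
  unfolding matrix_matrix_mult_def vec_eq_iff
proof (intro allI)
  fix a b :: "'n + 'n"
  show "(\<chi> i j. \<Sum>k\<in>UNIV. Jmat $ i $ k * Jmat $ k $ j) $ a $ b =
      (- mat 1 :: real^('n + 'n)^('n + 'n)) $ a $ b"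
    by (cases a; cases b)
      (auto simp: sum_UNIV_Plus mat_def Jmat_def if_zero_times times_if_zero sum.delta sum.delta'
        cong del: if_weak_cong)
qed

lemma transpose_Jmat: "transpose (Jmat :: real^('n::finite + 'n)^('n + 'n)) = - Jmat"
  unfolding transpose_def vec_eq_iff
proof (intro allI)
  fix a b :: "'n + 'n"
  show "(\<chi> i j. Jmat $ j $ i) $ a $ b = (- Jmat :: real^('n + 'n)^('n + 'n)) $ a $ b"
    by (cases a; cases b) (auto simp: Jmat_def)
qed

lemma matrix_add_rdistrib: "(A + B) ** C = A ** C + B ** C"
  for A B :: "'a::semiring_1^'m::finite^'l::finite" and C :: "'a^'k::finite^'m"
  by (simp add: matrix_matrix_mult_def vec_eq_iff sum.distrib distrib_right)

lemma matrix_diff_ldistrib: "A ** (B - C) = A ** B - A ** C"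
  for A :: "'a::ring_1^'m::finite^'l::finite" and B C :: "'a^'k::finite^'m"
  by (simp add: matrix_matrix_mult_def vec_eq_iff sum_subtractf right_diff_distrib)

lemma matrix_diff_rdistrib: "(A - B) ** C = A ** C - B ** C"
  for A B :: "'a::ring_1^'m::finite^'l::finite" and C :: "'a^'k::finite^'m"
  by (simp add: matrix_matrix_mult_def vec_eq_iff sum_subtractf left_diff_distrib)

lemma matrix_neg_left: "(- A) ** C = - (A ** C)"
  for A :: "'a::ring_1^'m::finite^'l::finite" and C :: "'a^'k::finite^'m"
  by (simp add: matrix_matrix_mult_def vec_eq_iff sum_negf)

lemma matrix_neg_right: "A ** (- C) = - (A ** C)"
  for A :: "'a::ring_1^'m::finite^'l::finite" and C :: "'a^'k::finite^'m"
  by (simp add: matrix_matrix_mult_def vec_eq_iff sum_negf)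

lemma transpose_add: "transpose (A + B) = transpose A + transpose B"
  for A B :: "'a::plus^'m^'l"
  by (simp add: transpose_def vec_eq_iff)

lemma transpose_diff: "transpose (A - B) = transpose A - transpose B"
  for A B :: "'a::minus^'m^'l"
  by (simp add: transpose_def vec_eq_iff)

lemma transpose_neg: "transpose (- A) = - transpose A"
  for A :: "'a::uminus^'m^'l"
  by (simp add: transpose_def vec_eq_iff)

lemma Jmat_Jmat_left: "(Jmat :: real^('n::finite + 'n)^('n + 'n)) ** (Jmat ** M) = - M"
  by (simp add: matrix_mul_assoc Jmat_squared matrix_neg_left)

lemmas matrix_simps = matrix_add_ldistrib matrix_add_rdistrib matrix_diff_ldistrib matrix_diff_rdistrib
  matrix_neg_left matrix_neg_right scalar_matrix_assoc[symmetric] matrix_scalar_ac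
  transpose_add transpose_diff transpose_neg transpose_scalar matrix_transpose_mul
  matrix_mul_assoc[symmetric] Jmat_squared Jmat_Jmat_left transpose_Jmat

lemma transpose_sp:
  assumes "(X :: real^('n::finite + 'n)^('n + 'n)) \<in> sp"
  shows "transpose X = Jmat ** (X ** Jmat)"
proof -
  have "transpose X ** Jmat = - (Jmat ** X)"
    using assms unfolding sp_def by (simp add: eq_neg_iff_add_eq_0)
  then have "(transpose X ** Jmat) ** Jmat = (- (Jmat ** X)) ** Jmat" by simp
  then show ?thesis by (simp add: matrix_simps)
qed

definition sp_sym :: "real^('n::finite + 'n)^('n + 'n) \<Rightarrow> real^('n + 'n)^('n + 'n)" where
  "sp_sym X = (- (1/2)) *\<^sub>R (X ** Jmat)"

lemma transpose_sp_sym: "X \<in> sp \<Longrightarrow> transpose (sp_sym X) = sp_sym X"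
  unfolding sp_sym_def by (simp add: matrix_simps transpose_sp)

lemma sp_sym_linear: "sp_sym (c *\<^sub>R X + Y) = c *\<^sub>R sp_sym X + sp_sym Y"
  unfolding sp_sym_def by (simp add: matrix_simps algebra_simps)

lemma sp_sym_eq_0: "sp_sym X = 0 \<Longrightarrow> X = 0"
proof -
  assume "sp_sym X = 0"
  then have "(X ** Jmat) ** Jmat = 0" unfolding sp_sym_def by simp
  then show "X = 0" by (simp add: matrix_simps)
qed

lemma sp_sym_surj:
  assumes "transpose M = M"
  shows "2 *\<^sub>R (M ** Jmat) \<in> sp" "sp_sym (2 *\<^sub>R (M ** Jmat)) = M"
  using assms unfolding sp_def sp_sym_def by (simp_all add: matrix_simps)

definition bracket_matrix ::
  "real^('n::finite + 'n)^('n + 'n) \<Rightarrow> real^('n + 'n)^('n + 'n) \<Rightarrow> real^('n + 'n)^('n + 'n)" where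
  "bracket_matrix A B = transpose (transpose A ** Jmat ** B + transpose A ** Jmat ** transpose B
      + A ** Jmat ** B + A ** Jmat ** transpose B)"

lemma sp_sym_commutator_antisymmetric:
  assumes X: "X \<in> sp" and Y: "Y \<in> sp"
  defines "C \<equiv> sp_sym (mbr X Y) - bracket_matrix (sp_sym X) (sp_sym Y)"
  shows "transpose C = - C"
proof -
  have "transpose (sp_sym X) = sp_sym X" "transpose (sp_sym Y) = sp_sym Y"
    using transpose_sp_sym X Y by auto
  then have C: "C = sp_sym (mbr X Y) - 4 *\<^sub>R transpose (sp_sym X ** Jmat ** sp_sym Y)"
    unfolding C_def bracket_matrix_def by (simp add: vec_eq_iff transpose_def)
  show ?thesis
    unfolding C sp_sym_def mbr_def
    by (simp add: matrix_simps transpose_sp[OF X] transpose_sp[OF Y] algebra_simps)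
qed

lemma sum_transpose_J_product:
  fixes A B J :: "real^'i::finite^'i" and D :: "'i \<Rightarrow> 'i \<Rightarrow> real"
  shows "(\<Sum>a\<in>UNIV. \<Sum>b\<in>UNIV. \<Sum>c\<in>UNIV. \<Sum>d\<in>UNIV. A$a$b * B$c$d * (J$a$c * D d b)) =
         (\<Sum>d\<in>UNIV. \<Sum>b\<in>UNIV. (transpose A ** J ** B)$b$d * D d b)"
proof -
  have "(\<Sum>a\<in>UNIV. \<Sum>b\<in>UNIV. \<Sum>c\<in>UNIV. \<Sum>d\<in>UNIV. A$a$b * B$c$d * (J$a$c * D d b))
      = (\<Sum>a\<in>UNIV. \<Sum>b\<in>UNIV. \<Sum>d\<in>UNIV. \<Sum>c\<in>UNIV. A$a$b * B$c$d * (J$a$c * D d b))"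
    by (rule sum.cong[OF refl], rule sum.cong[OF refl], rule sum.swap)
  also have "\<dots> = (\<Sum>a\<in>UNIV. \<Sum>d\<in>UNIV. \<Sum>b\<in>UNIV. \<Sum>c\<in>UNIV. A$a$b * B$c$d * (J$a$c * D d b))"
    by (rule sum.cong[OF refl], rule sum.swap)
  also have "\<dots> = (\<Sum>d\<in>UNIV. \<Sum>b\<in>UNIV. \<Sum>a\<in>UNIV. \<Sum>c\<in>UNIV. A$a$b * B$c$d * (J$a$c * D d b))"
    by (subst sum.swap) (rule sum.cong[OF refl], rule sum.swap)
  also have "\<dots> = (\<Sum>d\<in>UNIV. \<Sum>b\<in>UNIV. \<Sum>c\<in>UNIV. \<Sum>a\<in>UNIV. A$a$b * B$c$d * (J$a$c * D d b))"
    by (rule sum.cong[OF refl], rule sum.cong[OF refl], rule sum.swap)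
  also have "\<dots> = (\<Sum>d\<in>UNIV. \<Sum>b\<in>UNIV. (transpose A ** J ** B)$b$d * D d b)"
    by (simp add: matrix_matrix_mult_def transpose_def sum_distrib_left sum_distrib_right mult_ac)
  finally show ?thesis .
qed

lemma sum_bracket_coefficients:
  fixes A B J :: "real^'i::finite^'i" and D :: "'i \<Rightarrow> 'i \<Rightarrow> real"
  shows "(\<Sum>a\<in>UNIV. \<Sum>b\<in>UNIV. \<Sum>c\<in>UNIV. \<Sum>d\<in>UNIV. A$a$b * B$c$d *
            (J$a$c * D d b + J$a$d * D c b + J$b$c * D d a + J$b$d * D c a)) =
         (\<Sum>x\<in>UNIV. \<Sum>y\<in>UNIV. (transpose A ** J ** B + transpose A ** J ** transpose B
            + A ** J ** B + A ** J ** transpose B)$y$x * D x y)"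
proof -
  have swap_cd: "(\<Sum>a\<in>UNIV. \<Sum>b\<in>UNIV. \<Sum>c\<in>UNIV. \<Sum>d\<in>UNIV. F a b c d) =
      (\<Sum>a\<in>UNIV. \<Sum>b\<in>UNIV. \<Sum>d\<in>UNIV. \<Sum>c\<in>UNIV. F a b c d)"
    for F :: "'i \<Rightarrow> 'i \<Rightarrow> 'i \<Rightarrow> 'i \<Rightarrow> real"
    by (rule sum.cong[OF refl], rule sum.cong[OF refl], rule sum.swap)
  note core = sum_transpose_J_product[where J = J and D = D]
  have "(\<Sum>a\<in>UNIV. \<Sum>b\<in>UNIV. \<Sum>c\<in>UNIV. \<Sum>d\<in>UNIV. A$a$b * B$c$d * (J$a$d * D c b)) =
      (\<Sum>x\<in>UNIV. \<Sum>y\<in>UNIV. (transpose A ** J ** transpose B)$y$x * D x y)"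
    using core[of A "transpose B"] by (subst swap_cd) (simp add: transpose_def)
  moreover have "(\<Sum>a\<in>UNIV. \<Sum>b\<in>UNIV. \<Sum>c\<in>UNIV. \<Sum>d\<in>UNIV. A$a$b * B$c$d * (J$b$c * D d a)) =
      (\<Sum>x\<in>UNIV. \<Sum>y\<in>UNIV. (A ** J ** B)$y$x * D x y)"
    using core[of "transpose A" B] by (subst sum.swap) (simp add: transpose_def)
  moreover have "(\<Sum>a\<in>UNIV. \<Sum>b\<in>UNIV. \<Sum>c\<in>UNIV. \<Sum>d\<in>UNIV. A$a$b * B$c$d * (J$b$d * D c a)) =
      (\<Sum>x\<in>UNIV. \<Sum>y\<in>UNIV. (A ** J ** transpose B)$y$x * D x y)"
    using core[of "transpose A" "transpose B"]
    by (subst sum.swap, subst swap_cd) (simp add: transpose_def)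
  ultimately show ?thesis
    using core[of A B] by (simp add: distrib_left distrib_right sum.distrib)
qed

lemma sum_symmetrized_entry:
  fixes M :: "real^'i::finite^'i"
  shows "(\<Sum>a\<in>UNIV. \<Sum>b\<in>UNIV. M$a$b * (axis a 1 $ p * axis b 1 $ q + axis a 1 $ q * axis b 1 $ p))
    = M$p$q + M$q$p"
  by (simp add: axis_def distrib_left sum.distrib times_if_zero if_zero_times sum.delta' cong del: if_weak_cong)

section \<open>Spiders indexed by matrices\<close>

definition matrix_spider :: "'a \<Rightarrow> real^('n::finite + 'n)^('n + 'n) \<Rightarrow> ('a, 'n) gen \<Rightarrow> real" where
  "matrix_spider u M = (\<lambda>h. \<Sum>a\<in>UNIV. \<Sum>b\<in>UNIV. M $ a $ b * delta (u, [axis a 1, axis b 1]) h)"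

definition axis_spiders :: "'a \<Rightarrow> ('a, 'n::finite) gen set" where
  "axis_spiders u = (\<lambda>(a, b). (u, [axis a 1, axis b 1])) ` UNIV"

lemma matrix_spider_in_A0: "matrix_spider u M \<in> A0 u"
proof -
  have eq: "matrix_spider u M = (\<Sum>a\<in>UNIV. \<Sum>b\<in>UNIV. (\<lambda>h. M $ a $ b * delta (u, [axis a 1, axis b 1]) h))"
    by (simp add: matrix_spider_def fun_eq_iff sum_fun_apply)
  show ?thesis
    unfolding A0_eq_span eq
    by (intro fun_vec.span_sum fun_vec.span_scale) (auto intro: fun_vec.span_base)
qed

lemma matrix_spider_add: "matrix_spider u (A + B) = matrix_spider u A + matrix_spider u B"
  unfolding matrix_spider_def by (simp add: fun_eq_iff sum.distrib distrib_right)

lemma matrix_spider_scaleR: "matrix_spider u (c *\<^sub>R A) = (\<lambda>h. c * matrix_spider u A h)"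
  unfolding matrix_spider_def by (simp add: fun_eq_iff sum_distrib_left mult.assoc)

lemma matrix_spider_diff: "matrix_spider u (A - B) = matrix_spider u A - matrix_spider u B"
  unfolding matrix_spider_def by (simp add: fun_eq_iff sum_subtractf left_diff_distrib)

lemma matrix_spider_axis: "matrix_spider u M (u, [axis a 1, axis b 1]) = M $ a $ b"
proof -
  have "matrix_spider u M (u, [axis a 1, axis b 1]) =
      (\<Sum>a'\<in>UNIV. \<Sum>b'\<in>UNIV. if a' = a \<and> b' = b then M $ a' $ b' else 0)"
    unfolding matrix_spider_def delta_def by (auto simp: axis_eq_axis intro!: sum.cong)
  also have "\<dots> = (\<Sum>a'\<in>UNIV. if a' = a then M $ a' $ b else 0)"
    by (intro sum.cong refl) (simp add: sum.delta)
  finally show ?thesis by simp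
qed

lemma finite_axis_spiders: "finite (axis_spiders u)"
  unfolding axis_spiders_def by simp

lemma support_matrix_spider: "{g. matrix_spider u M g \<noteq> 0} \<subseteq> axis_spiders u"
proof
  fix g assume "g \<in> {g. matrix_spider u M g \<noteq> 0}"
  then obtain a b where "M $ a $ b * delta (u, [axis a 1, axis b 1]) g \<noteq> 0"
    unfolding matrix_spider_def by (auto elim!: sum.not_neutral_contains_not_neutral)
  then show "g \<in> axis_spiders u" by (auto simp: axis_spiders_def delta_def split: if_splits)
qed

lemma sum_axis_spiders:
  "(\<Sum>g\<in>axis_spiders u. F g) = (\<Sum>a\<in>UNIV. \<Sum>b\<in>UNIV. F (u, [axis a 1, axis b 1]))"
proof -
  have inj: "inj (\<lambda>(a, b). (u, [axis a 1 :: real^('n::finite + 'n), axis b 1]))"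
    by (auto simp: inj_on_def axis_eq_axis)
  show ?thesis
    unfolding axis_spiders_def sum.reindex[OF inj]
    by (simp add: sum.cartesian_product split_def flip: UNIV_Times_UNIV)
qed

lemma br_eq_sum_superset:
  assumes "finite T1" "finite T2" "{g. f g \<noteq> 0} \<subseteq> T1" "{g. f' g \<noteq> 0} \<subseteq> T2"
  shows "br u gam act f f' h = (\<Sum>g1\<in>T1. \<Sum>g2\<in>T2. f g1 * f' g2 * brgen u gam act g1 g2 h)"
proof -
  have "br u gam act f f' h = (\<Sum>g1 | f g1 \<noteq> 0. \<Sum>g2 | f' g2 \<noteq> 0. f g1 * f' g2 * brgen u gam act g1 g2 h)"
    unfolding br_def ..
  also have "\<dots> = (\<Sum>g1 | f g1 \<noteq> 0. \<Sum>g2\<in>T2. f g1 * f' g2 * brgen u gam act g1 g2 h)"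
    by (intro sum.cong refl sum.mono_neutral_left) (use assms in auto)
  also have "\<dots> = (\<Sum>g1\<in>T1. \<Sum>g2\<in>T2. f g1 * f' g2 * brgen u gam act g1 g2 h)"
    by (intro sum.mono_neutral_left) (use assms in auto)
  finally show ?thesis .
qed

lemma leg_linear_in_Rel:
  assumes "valid_gen Op (x, ws)" "j < length ws"
  shows "(\<lambda>h. delta (x, ws[j := c *\<^sub>R v + v']) h - c * delta (x, ws[j := v]) h - delta (x, ws[j := v']) h)
    \<in> Rel Op act"
  unfolding Rel_eq_span relations_def using assms by (intro fun_vec.span_base) blast

lemma permute_legs_in_Rel:
  assumes "valid_gen Op (x, ws)" "s permutes {..<length ws}"
  shows "delta (act (length ws - 1) s x, map (\<lambda>k. ws ! inv s k) [0..<length ws]) - delta (x, ws)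
    \<in> Rel Op act"
  unfolding Rel_eq_span relations_def fun_diff_def using assms by (intro fun_vec.span_base) blast

lemma leg_sum_in_Rel:
  assumes "valid_gen Op (x, ws)" "j < length ws" "finite S"
  shows "delta (x, ws[j := \<Sum>a\<in>S. c a *\<^sub>R y a]) - (\<Sum>a\<in>S. (\<lambda>h. c a * delta (x, ws[j := y a]) h))
    \<in> Rel Op act"
  using assms(3)
proof (induction S rule: finite_induct)
  case empty
  have "(\<lambda>h. - 1 * (delta (x, ws[j := 1 *\<^sub>R 0 + 0]) h - 1 * delta (x, ws[j := 0]) h
      - delta (x, ws[j := 0]) h)) \<in> Rel Op act"
    unfolding Rel_eq_span
    by (rule fun_vec.span_scale, fold Rel_eq_span, rule leg_linear_in_Rel[OF assms(1,2)])
  then show ?case by (simp add: fun_diff_def)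
next
  case (insert a S)
  let ?s = "\<Sum>a\<in>S. c a *\<^sub>R y a"
  have "(\<lambda>h. delta (x, ws[j := c a *\<^sub>R y a + ?s]) h - c a * delta (x, ws[j := y a]) h - delta (x, ws[j := ?s]) h)
      + (delta (x, ws[j := ?s]) - (\<Sum>a\<in>S. (\<lambda>h. c a * delta (x, ws[j := y a]) h))) \<in> Rel Op act"
    unfolding Rel_eq_span
    by (rule fun_vec.span_add; fold Rel_eq_span) (fact leg_linear_in_Rel[OF assms(1,2)], fact insert.IH)
  then show ?case using insert.hyps by (simp add: fun_diff_def plus_fun_def sum_fun_apply algebra_simps)
qed

lemma permutes_lessThan_2:
  assumes "s permutes {..<2::nat}"
  shows "s = id \<or> s = Transposition.transpose 0 1"
proof -
  have "s 0 < 2" "s 1 < 2" "s 0 \<noteq> s 1" "\<And>k. 2 \<le> k \<Longrightarrow> s k = k"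
    using permutes_in_image[OF assms] permutes_inj[OF assms] permutes_not_in[OF assms]
    by (auto dest: injD)
  then show ?thesis
    unfolding fun_eq_iff Transposition.transpose_def
    by (metis One_nat_def id_apply less_2_cases_iff not_less)
qed

definition two_leg_functional ::
  "('a \<Rightarrow> real) \<Rightarrow> (real^('n::finite + 'n) \<Rightarrow> real^('n + 'n) \<Rightarrow> real) \<Rightarrow> ('a, 'n) gen \<Rightarrow> real" where
  "two_leg_functional lam B g =
     (if length (snd g) = 2 then lam (fst g) * B (snd g ! 0) (snd g ! 1) else 0)"

lemma pairing_two_leg_functional_matrix_spider:
  "pairing (two_leg_functional lam B) (matrix_spider u M) =
    lam u * (\<Sum>a\<in>UNIV. \<Sum>b\<in>UNIV. M$a$b * B (axis a 1) (axis b 1))"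
  by (simp add: pairing_eq_sum_superset[OF finite_axis_spiders support_matrix_spider] sum_axis_spiders
      matrix_spider_axis two_leg_functional_def sum_distrib_left mult_ac)

section \<open>Two-legged unit spiders in a cyclic operad\<close>

context
  fixes Op :: "nat \<Rightarrow> 'a::real_vector set" and u :: 'a
    and gam :: "nat list \<Rightarrow> 'a \<Rightarrow> 'a list \<Rightarrow> 'a" and act :: "nat \<Rightarrow> (nat \<Rightarrow> nat) \<Rightarrow> 'a \<Rightarrow> 'a"
  assumes op: "cyclic_operad Op u gam act"
begin

lemma unit_in_Op1: "u \<in> Op 1"
  using op unfolding cyclic_operad_def by blast

lemma gam_unit_unit: "gam [1] u [u] = u"
  using op unit_in_Op1 unfolding cyclic_operad_def by (metis order_refl)

lemma act_swap_unit: "act 1 (Transposition.transpose 0 1) u = u"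
  using op unfolding cyclic_operad_def by blast

lemma act_id_Op1: "x \<in> Op 1 \<Longrightarrow> act 1 id x = x"
  using op unfolding cyclic_operad_def by (metis order_refl)

lemma act_swap_linear:
  "x \<in> Op 1 \<Longrightarrow> x' \<in> Op 1 \<Longrightarrow>
    act 1 (Transposition.transpose 0 1) (c *\<^sub>R x + x') =
    c *\<^sub>R act 1 (Transposition.transpose 0 1) x + act 1 (Transposition.transpose 0 1) x'"
  using op permutes_swap_id[of 0 "{..1::nat}" 1] unfolding cyclic_operad_def by (simp add: order_refl)

lemma act_swap_involutive:
  assumes "x \<in> Op 1"
  shows "act 1 (Transposition.transpose 0 1) (act 1 (Transposition.transpose 0 1) x) = x"
proof -
  let ?t = "Transposition.transpose (0::nat) 1"
  have "?t permutes {..1}" by (rule permutes_swap_id) auto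
  then have "act 1 (?t \<circ> ?t) x = act 1 ?t (act 1 ?t x)"
    using op assms unfolding cyclic_operad_def by (metis order_refl)
  then show ?thesis using act_id_Op1[OF assms] by simp
qed

lemma valid_unit_spider: "valid_gen Op (u, [v, w])"
  unfolding valid_gen_def using unit_in_Op1 by simp

lemma mate_unit_spiders:
  assumes "i < 2" "j < 2"
  shows "mate u gam act (u, [v0, v1]) i (u, [w0, w1]) j =
    (u, [if j = 0 then w1 else w0, if i = 0 then v1 else v0])"
proof -
  have "act 1 (Transposition.transpose i 0) u = u" "act 1 (Transposition.transpose j 1) u = u"
    using assms act_swap_unit act_id_Op1[OF unit_in_Op1]
    by (auto simp: less_2_cases_iff transpose_commute)
  then show ?thesis
    unfolding mate_def Let_def using assms gam_unit_unit
    by (auto simp: less_2_cases_iff upt_rec Transposition.transpose_def)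
qed

lemma brgen_unit_spiders:
  "brgen u gam act (u, [v0, v1]) (u, [w0, w1]) =
    (\<lambda>h. omega v0 w0 * delta (u, [w1, v1]) h + omega v0 w1 * delta (u, [w0, v1]) h
       + omega v1 w0 * delta (u, [w1, v0]) h + omega v1 w1 * delta (u, [w0, v0]) h)"
proof -
  have "{..<length [v0, v1]} = {0::nat, 1}" "{..<length [w0, w1]} = {0::nat, 1}" by auto
  then show ?thesis
    unfolding brgen_def snd_conv by (simp add: mate_unit_spiders add.assoc)
qed

lemma br_matrix_spider:
  "br u gam act (matrix_spider u A) (matrix_spider u B) = matrix_spider u (bracket_matrix A B)"
proof
  fix h
  have "br u gam act (matrix_spider u A) (matrix_spider u B) h =
      (\<Sum>g1\<in>axis_spiders u. \<Sum>g2\<in>axis_spiders u.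
        matrix_spider u A g1 * matrix_spider u B g2 * brgen u gam act g1 g2 h)"
    by (rule br_eq_sum_superset) (auto simp: finite_axis_spiders support_matrix_spider)
  also have "\<dots> = (\<Sum>a\<in>UNIV. \<Sum>b\<in>UNIV. \<Sum>c\<in>UNIV. \<Sum>d\<in>UNIV. A$a$b * B$c$d *
      (Jmat$a$c * delta (u, [axis d 1, axis b 1]) h + Jmat$a$d * delta (u, [axis c 1, axis b 1]) h
     + Jmat$b$c * delta (u, [axis d 1, axis a 1]) h + Jmat$b$d * delta (u, [axis c 1, axis a 1]) h))"
    by (simp add: sum_axis_spiders matrix_spider_axis brgen_unit_spiders omega_axis)
  also have "\<dots> = matrix_spider u (bracket_matrix A B) h"
    unfolding sum_bracket_coefficients matrix_spider_def bracket_matrix_def by (simp add: transpose_def)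
  finally show "br u gam act (matrix_spider u A) (matrix_spider u B) h = \<dots>" .
qed

lemma swap_legs_in_Rel: "delta (u, [w, v]) - delta (u, [v, w]) \<in> Rel Op act"
proof -
  let ?t = "Transposition.transpose (0::nat) 1"
  have "?t permutes {..<length [v, w]}" by (rule permutes_swap_id) auto
  then have "delta (act (length [v, w] - 1) ?t u, map (\<lambda>k. [v, w] ! inv ?t k) [0..<length [v, w]])
      - delta (u, [v, w]) \<in> Rel Op act"
    by (rule permute_legs_in_Rel[OF valid_unit_spider])
  moreover have "map (\<lambda>k. [v, w] ! inv ?t k) [0..<length [v, w]] = [w, v]"
    by (simp add: upt_rec Transposition.transpose_def)
  ultimately show ?thesis using act_swap_unit by simp
qed

lemma matrix_spider_transpose_in_Rel:
  "matrix_spider u (transpose M) - matrix_spider u M \<in> Rel Op act"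
proof -
  have "matrix_spider u (transpose M) - matrix_spider u M =
      (\<Sum>a\<in>UNIV. \<Sum>b\<in>UNIV. (\<lambda>h. M$a$b *
        (delta (u, [axis b 1, axis a 1]) - delta (u, [axis a 1, axis b 1])) h))"
    unfolding matrix_spider_def transpose_def
    by (simp add: fun_eq_iff sum_fun_apply sum_subtractf right_diff_distrib) (intro allI, rule sum.swap)
  also have "\<dots> \<in> Rel Op act"
    unfolding Rel_eq_span
    by (intro fun_vec.span_sum fun_vec.span_scale) (fold Rel_eq_span, rule swap_legs_in_Rel)
  finally show ?thesis .
qed

lemma antisymmetric_matrix_spider_in_Rel:
  assumes "transpose M = - M"
  shows "matrix_spider u M \<in> Rel Op act"
proof -
  have "(\<lambda>h. - (1/2) * (matrix_spider u (transpose M) - matrix_spider u M) h) \<in> Rel Op act"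
    using matrix_spider_transpose_in_Rel unfolding Rel_eq_span by (rule fun_vec.span_scale)
  moreover have "matrix_spider u (transpose M) - matrix_spider u M = matrix_spider u ((- 2) *\<^sub>R M)"
    unfolding matrix_spider_diff[symmetric] using assms
    by (intro arg_cong[where f = "matrix_spider u"]) (simp add: vec_eq_iff)
  then have "matrix_spider u (transpose M) - matrix_spider u M = (\<lambda>h. - 2 * matrix_spider u M h)"
    by (simp only: matrix_spider_scaleR)
  ultimately show ?thesis by simp
qed

lemma unit_spider_equiv_matrix_spider:
  "delta (u, [v, w]) - matrix_spider u (\<chi> a b. v$a * w$b) \<in> Rel Op act"
proof -
  have expand: "x = (\<Sum>a\<in>UNIV. x$a *\<^sub>R axis a 1)" for x :: "real^('n::finite + 'n)"
    using basis_expansion[of x] by (simp add: scalar_mult_eq_scaleR)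
  have "delta (u, [v, w][0 := \<Sum>a\<in>UNIV. v$a *\<^sub>R axis a 1])
      - (\<Sum>a\<in>UNIV. (\<lambda>h. v$a * delta (u, [v, w][0 := axis a 1]) h)) \<in> Rel Op act"
    by (rule leg_sum_in_Rel[OF valid_unit_spider]) auto
  then have first_leg:
      "delta (u, [v, w]) - (\<Sum>a\<in>UNIV. (\<lambda>h. v$a * delta (u, [axis a 1, w]) h)) \<in> Rel Op act"
    by (simp flip: expand)
  have "delta (u, [axis a 1, w][1 := \<Sum>b\<in>UNIV. w$b *\<^sub>R axis b 1])
      - (\<Sum>b\<in>UNIV. (\<lambda>h. w$b * delta (u, [axis a 1, w][1 := axis b 1]) h)) \<in> Rel Op act" for a
    by (rule leg_sum_in_Rel[OF valid_unit_spider]) auto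
  then have "delta (u, [axis a 1, w]) - (\<Sum>b\<in>UNIV. (\<lambda>h. w$b * delta (u, [axis a 1, axis b 1]) h))
      \<in> Rel Op act" for a
    by (simp flip: expand)
  then have second_leg: "(\<Sum>a\<in>UNIV. (\<lambda>h. v$a * (delta (u, [axis a 1, w])
      - (\<Sum>b\<in>UNIV. (\<lambda>h. w$b * delta (u, [axis a 1, axis b 1]) h))) h)) \<in> Rel Op act"
    unfolding Rel_eq_span by (intro fun_vec.span_sum fun_vec.span_scale)
  have "delta (u, [v, w]) - (\<Sum>a\<in>UNIV. (\<lambda>h. v$a * delta (u, [axis a 1, w]) h))
      + (\<Sum>a\<in>UNIV. (\<lambda>h. v$a * (delta (u, [axis a 1, w])
      - (\<Sum>b\<in>UNIV. (\<lambda>h. w$b * delta (u, [axis a 1, axis b 1]) h))) h)) \<in> Rel Op act"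
    using first_leg second_leg unfolding Rel_eq_span by (rule fun_vec.span_add)
  then show ?thesis
    by (simp add: matrix_spider_def fun_diff_def plus_fun_def sum_fun_apply right_diff_distrib
        sum_subtractf sum_distrib_left mult.assoc)
qed

lemma A0_equiv_matrix_spider:
  assumes "a \<in> A0 u"
  shows "\<exists>M. a - matrix_spider u M \<in> Rel Op act"
proof -
  have subspace: "fun_vec.subspace {a. \<exists>M. a - matrix_spider u M \<in> Rel Op act}"
    unfolding fun_vec.subspace_def
  proof safe
    show "\<exists>M. 0 - matrix_spider u M \<in> Rel Op act"
      by (rule exI[of _ 0]) (simp add: matrix_spider_def Rel_eq_span fun_vec.span_zero flip: zero_fun_def)
  next
    fix a a' :: "('a, 'n::finite) gen \<Rightarrow> real" and M M' :: "real^('n + 'n)^('n + 'n)"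
    assume "a - matrix_spider u M \<in> Rel Op act" "a' - matrix_spider u M' \<in> Rel Op act"
    then have "(a - matrix_spider u M) + (a' - matrix_spider u M') \<in> Rel Op act"
      unfolding Rel_eq_span by (rule fun_vec.span_add)
    then show "\<exists>M''. a + a' - matrix_spider u M'' \<in> Rel Op act"
      by (intro exI[of _ "M + M'"]) (simp add: matrix_spider_add algebra_simps)
  next
    fix c and a :: "('a, 'n::finite) gen \<Rightarrow> real" and M :: "real^('n + 'n)^('n + 'n)"
    assume "a - matrix_spider u M \<in> Rel Op act"
    then have "(\<lambda>h. c * (a - matrix_spider u M) h) \<in> Rel Op act"
      unfolding Rel_eq_span by (rule fun_vec.span_scale)
    then show "\<exists>M'. (\<lambda>h. c * a h) - matrix_spider u M' \<in> Rel Op act"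
      by (intro exI[of _ "c *\<^sub>R M"]) (simp add: matrix_spider_scaleR fun_diff_def right_diff_distrib)
  qed
  show ?thesis
    using fun_vec.span_induct[OF assms[unfolded A0_eq_span] subspace] unit_spider_equiv_matrix_spider
    by blast
qed

lemma A0_equiv_symmetric_matrix_spider:
  assumes "a \<in> A0 u"
  shows "\<exists>M. transpose M = M \<and> a - matrix_spider u M \<in> Rel Op act"
proof -
  obtain M where M: "a - matrix_spider u M \<in> Rel Op act"
    using A0_equiv_matrix_spider[OF assms] ..
  have "(a - matrix_spider u M) - (\<lambda>h. 1/2 * (matrix_spider u (transpose M) - matrix_spider u M) h)
      \<in> Rel Op act"
    using M fun_vec.span_scale[OF matrix_spider_transpose_in_Rel[unfolded Rel_eq_span]]
    unfolding Rel_eq_span by (rule fun_vec.span_diff)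
  then have "a - matrix_spider u ((1/2) *\<^sub>R (M + transpose M)) \<in> Rel Op act"
    by (simp add: matrix_spider_scaleR matrix_spider_add fun_diff_def plus_fun_def algebra_simps)
  moreover have "transpose ((1/2) *\<^sub>R (M + transpose M)) = (1/2) *\<^sub>R (M + transpose M)"
    by (simp add: transpose_def vec_eq_iff)
  ultimately show ?thesis by blast
qed

lemma two_leg_functional_annihilates_Rel:
  fixes lam :: "'a \<Rightarrow> real" and B :: "real^('n::finite + 'n) \<Rightarrow> real^('n + 'n) \<Rightarrow> real"
    and f :: "('a, 'n) gen \<Rightarrow> real"
  assumes lam_linear: "\<And>x x' c. x \<in> Op 1 \<Longrightarrow> x' \<in> Op 1 \<Longrightarrow> lam (c *\<^sub>R x + x') = c * lam x + lam x'"
    and lam_swap: "\<And>x. x \<in> Op 1 \<Longrightarrow> lam (act 1 (Transposition.transpose 0 1) x) = lam x"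
    and B: "bilinear B" "\<And>v w. B v w = B w v"
    and f: "f \<in> Rel Op act"
  shows "pairing (two_leg_functional lam B) f = 0"
proof (rule pairing_vanishes_on_span[OF _ f[unfolded Rel_eq_span]])
  let ?l = "two_leg_functional lam B"
  fix r :: "('a, 'n) gen \<Rightarrow> real" assume "r \<in> relations Op act"
  then show "finite {g. r g \<noteq> 0} \<and> pairing ?l r = 0"
    unfolding relations_def
  proof (elim UnE CollectE exE conjE)
    fix x x' ws c
    assume r: "r = (\<lambda>h. delta (c *\<^sub>R x + x', ws) h - c * delta (x, ws) h - delta (x', ws) h)"
      and valid: "valid_gen Op (x, ws)" "valid_gen Op (x', ws)"
    have "?l (c *\<^sub>R x + x', ws) = c * ?l (x, ws) + ?l (x', ws)"
    proof (cases "length ws = 2")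
      case True
      then have "x \<in> Op 1" "x' \<in> Op 1" using valid by (simp_all add: valid_gen_def)
      then show ?thesis using True by (simp add: two_leg_functional_def lam_linear distrib_right)
    qed (simp add: two_leg_functional_def)
    then show ?thesis unfolding r by (intro delta_combination_annihilated) simp
  next
    fix x ws j v v' c
    assume r: "r = (\<lambda>h. delta (x, ws[j := c *\<^sub>R v + v']) h - c * delta (x, ws[j := v]) h
        - delta (x, ws[j := v']) h)" and "j < length ws"
    then have "length ws = 2 \<Longrightarrow> j = 0 \<or> j = 1" by auto
    then have "?l (x, ws[j := c *\<^sub>R v + v']) = c * ?l (x, ws[j := v]) + ?l (x, ws[j := v'])"
      by (auto simp: two_leg_functional_def bilinear_ladd[OF B(1)] bilinear_lmul[OF B(1)]
          bilinear_radd[OF B(1)] bilinear_rmul[OF B(1)] algebra_simps)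
    then show ?thesis unfolding r by (intro delta_combination_annihilated) simp
  next
    fix x ws s
    assume r: "r = (\<lambda>h. delta (act (length ws - 1) s x, map (\<lambda>k. ws ! inv s k) [0..<length ws]) h
        - delta (x, ws) h)" and valid: "valid_gen Op (x, ws)" and s: "s permutes {..<length ws}"
    let ?g = "(act (length ws - 1) s x, map (\<lambda>k. ws ! inv s k) [0..<length ws])"
    have "?l ?g = ?l (x, ws)"
    proof (cases "length ws = 2")
      case True
      then have "x \<in> Op 1" using valid by (simp add: valid_gen_def)
      moreover have "s = id \<or> s = Transposition.transpose 0 1"
        using permutes_lessThan_2 s True by simp
      ultimately show ?thesis
        using True act_id_Op1 lam_swap B(2)
        by (auto simp: two_leg_functional_def upt_rec Transposition.transpose_def)
    qed (simp add: two_leg_functional_def)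
    moreover have "r = (\<lambda>h. delta ?g h - 0 * delta ?g h - delta (x, ws) h)" using r by simp
    ultimately show ?thesis by (simp only:) (intro delta_combination_annihilated, simp)
  qed
qed

lemma swap_invariant_functional_exists:
  assumes "u \<noteq> 0"
  obtains lam :: "'a \<Rightarrow> real" where "lam u = 1"
    "\<And>x x' c. x \<in> Op 1 \<Longrightarrow> x' \<in> Op 1 \<Longrightarrow> lam (c *\<^sub>R x + x') = c * lam x + lam x'"
    "\<And>x. x \<in> Op 1 \<Longrightarrow> lam (act 1 (Transposition.transpose 0 1) x) = lam x"
proof -
  let ?t = "Transposition.transpose (0::nat) 1"
  obtain \<mu> :: "'a \<Rightarrow> real" where \<mu>: "linear \<mu>" "\<mu> u = 1"
    using linear_independent_extend[of "{u}" "\<lambda>_. 1"] assms by (auto simp: dependent_single)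
  show thesis
  proof (rule that[of "\<lambda>x. (\<mu> x + \<mu> (act 1 ?t x)) / 2"])
    show "(\<mu> u + \<mu> (act 1 ?t u)) / 2 = 1" using \<mu> act_swap_unit by simp
    show "(\<mu> (c *\<^sub>R x + x') + \<mu> (act 1 ?t (c *\<^sub>R x + x'))) / 2 =
        c * ((\<mu> x + \<mu> (act 1 ?t x)) / 2) + (\<mu> x' + \<mu> (act 1 ?t x')) / 2"
      if "x \<in> Op 1" "x' \<in> Op 1" for x x' c
    proof -
      have "\<mu> (c *\<^sub>R y + y') = c * \<mu> y + \<mu> y'" for y y'
        using linear_add[OF \<mu>(1)] linear_scale[OF \<mu>(1)] by simp
      then show ?thesis unfolding act_swap_linear[OF that] by (simp add: field_simps)
    qed
    show "(\<mu> (act 1 ?t x) + \<mu> (act 1 ?t (act 1 ?t x))) / 2 = (\<mu> x + \<mu> (act 1 ?t x)) / 2"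
      if "x \<in> Op 1" for x
      using act_swap_involutive[OF that] by simp
  qed
qed

lemma symmetric_matrix_spider_in_Rel_imp_zero:
  fixes M :: "real^('n::finite + 'n)^('n + 'n)"
  assumes "u \<noteq> 0" "transpose M = M" "matrix_spider u M \<in> Rel Op act"
  shows "M = 0"
proof -
  obtain lam where lam: "lam u = 1"
    "\<And>x x' c. x \<in> Op 1 \<Longrightarrow> x' \<in> Op 1 \<Longrightarrow> lam (c *\<^sub>R x + x') = c * lam x + lam x'"
    "\<And>x. x \<in> Op 1 \<Longrightarrow> lam (act 1 (Transposition.transpose 0 1) x) = lam x"
    using swap_invariant_functional_exists[OF assms(1)] by blast
  have "M $ p $ q = 0" for p q
  proof -
    let ?B = "\<lambda>v w :: real^('n + 'n). v$p * w$q + v$q * w$p"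
    have bil: "bilinear ?B"
      unfolding bilinear_def linear_iff by (simp add: algebra_simps)
    have sym: "?B v w = ?B w v" for v w by (simp add: algebra_simps)
    have "pairing (two_leg_functional lam ?B) (matrix_spider u M) = 0"
      by (rule two_leg_functional_annihilates_Rel[OF lam(2,3) bil sym assms(3)])
    then have "M $ p $ q + M $ q $ p = 0"
      by (simp add: pairing_two_leg_functional_matrix_spider lam(1) sum_symmetrized_entry)
    moreover have "M $ q $ p = M $ p $ q"
      using assms(2) unfolding vec_eq_iff transpose_def by simp
    ultimately show ?thesis by simp
  qed
  then show ?thesis by (simp add: vec_eq_iff)
qed

lemma brgen_unit_spiders_in_A0: "brgen u gam act (u, [v0, v1]) (u, [w0, w1]) \<in> A0 u"
proof -
  have eq: "brgen u gam act (u, [v0, v1]) (u, [w0, w1]) =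
      (\<lambda>h. omega v0 w0 * delta (u, [w1, v1]) h) + (\<lambda>h. omega v0 w1 * delta (u, [w0, v1]) h)
    + (\<lambda>h. omega v1 w0 * delta (u, [w1, v0]) h) + (\<lambda>h. omega v1 w1 * delta (u, [w0, v0]) h)"
    by (simp add: brgen_unit_spiders plus_fun_def)
  show ?thesis
    unfolding eq A0_eq_span by (intro fun_vec.span_add fun_vec.span_scale) (auto intro: fun_vec.span_base)
qed

lemma br_in_A0:
  assumes "a \<in> A0 u" "b \<in> A0 u"
  shows "br u gam act a b \<in> A0 u"
proof -
  let ?S = "{(u, [v, w]) | v w. True}"
  have support: "finite {g. f g \<noteq> 0} \<and> {g. f g \<noteq> 0} \<subseteq> ?S" if "f \<in> A0 u" for f
    using that unfolding A0_eq_span by (rule support_span[rotated]) (auto simp: delta_def split: if_splits)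
  have "br u gam act a b = (\<Sum>g1 | a g1 \<noteq> 0. \<Sum>g2 | b g2 \<noteq> 0. (\<lambda>h. a g1 * b g2 * brgen u gam act g1 g2 h))"
    by (simp add: br_def fun_eq_iff sum_fun_apply)
  also have "\<dots> \<in> A0 u"
    unfolding A0_eq_span
  proof (intro fun_vec.span_sum)
    fix g1 g2 assume "g1 \<in> {g. a g \<noteq> 0}" "g2 \<in> {g. b g \<noteq> 0}"
    then obtain v0 v1 w0 w1 where "g1 = (u, [v0, v1])" "g2 = (u, [w0, w1])"
      using support assms by blast
    then show "(\<lambda>h. a g1 * b g2 * brgen u gam act g1 g2 h) \<in> fun_vec.span {delta (u, [v, w]) | v w. True}"
      using brgen_unit_spiders_in_A0 unfolding A0_eq_span mult.assoc by (intro fun_vec.span_scale) simp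
  qed
  finally show ?thesis .
qed

end

theorem proposition2p17:
  fixes Op :: "nat \<Rightarrow> 'a::real_vector set"
    and u :: 'a
    and gam :: "nat list \<Rightarrow> 'a \<Rightarrow> 'a list \<Rightarrow> 'a"
    and act :: "nat \<Rightarrow> (nat \<Rightarrow> nat) \<Rightarrow> 'a \<Rightarrow> 'a"
  assumes "cyclic_operad Op u gam act"
    and "u \<noteq> 0"
  shows "(\<forall>a\<in>(A0 u :: (('a, 'n::finite) gen \<Rightarrow> real) set). \<forall>b\<in>A0 u.
            \<exists>c\<in>A0 u. (\<lambda>h. br u gam act a b h - c h) \<in> Rel Op act)
    \<and> (\<exists>\<phi> :: real^('n + 'n)^('n + 'n) \<Rightarrow> (('a, 'n) gen \<Rightarrow> real).
          (\<forall>X\<in>sp. \<phi> X \<in> A0 u)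
        \<and> (\<forall>X\<in>sp. \<forall>Y\<in>sp. \<forall>c::real.
             (\<lambda>h. \<phi> (c *\<^sub>R X + Y) h - c * \<phi> X h - \<phi> Y h) \<in> Rel Op act)
        \<and> (\<forall>X\<in>sp. \<phi> X \<in> Rel Op act \<longrightarrow> X = 0)
        \<and> (\<forall>a\<in>A0 u. \<exists>X\<in>sp. (\<lambda>h. a h - \<phi> X h) \<in> Rel Op act)
        \<and> (\<forall>X\<in>sp. \<forall>Y\<in>sp. (\<lambda>h. \<phi> (mbr X Y) h - br u gam act (\<phi> X) (\<phi> Y) h) \<in> Rel Op act))"
proof -
  note op = assms(1)
  have zero: "(\<lambda>h :: ('a, 'n) gen. 0) \<in> Rel Op act"
    unfolding Rel_eq_span by (rule fun_vec.span_zero[unfolded zero_fun_def])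
  define \<phi> :: "real^('n + 'n)^('n + 'n) \<Rightarrow> ('a, 'n) gen \<Rightarrow> real"
    where "\<phi> X = matrix_spider u (sp_sym X)" for X
  have closed: "\<exists>c\<in>A0 u. (\<lambda>h. br u gam act a b h - c h) \<in> Rel Op act"
    if "a \<in> A0 u" "b \<in> A0 u" for a b :: "('a, 'n) gen \<Rightarrow> real"
    using zero br_in_A0[OF op that] by (intro bexI[of _ "br u gam act a b"]) simp_all
  have linear: "(\<lambda>h. \<phi> (c *\<^sub>R X + Y) h - c * \<phi> X h - \<phi> Y h) \<in> Rel Op act" for X Y c
    using zero by (simp add: \<phi>_def sp_sym_linear matrix_spider_add matrix_spider_scaleR)
  have injective: "X = 0" if "X \<in> sp" "\<phi> X \<in> Rel Op act" for X
    using symmetric_matrix_spider_in_Rel_imp_zero[OF op assms(2) transpose_sp_sym] sp_sym_eq_0 that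
    unfolding \<phi>_def by blast
  have surjective: "\<exists>X\<in>sp. a - \<phi> X \<in> Rel Op act" if a: "a \<in> A0 u" for a
  proof -
    obtain M where "transpose M = M" "a - matrix_spider u M \<in> Rel Op act"
      using A0_equiv_symmetric_matrix_spider[OF op a] by blast
    then show ?thesis unfolding \<phi>_def using sp_sym_surj by metis
  qed
  have bracket: "\<phi> (mbr X Y) - br u gam act (\<phi> X) (\<phi> Y) \<in> Rel Op act" if "X \<in> sp" "Y \<in> sp" for X Y
    unfolding \<phi>_def br_matrix_spider[OF op] matrix_spider_diff[symmetric]
    by (rule antisymmetric_matrix_spider_in_Rel[OF op sp_sym_commutator_antisymmetric[OF that]])
  show ?thesis
    using closed linear injective surjective[unfolded fun_diff_def] bracket[unfolded fun_diff_def]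
    by (intro conjI exI[of _ \<phi>]) (auto simp: \<phi>_def matrix_spider_in_A0)
qed

end
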